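(* Let $L$ be an $\omega$-regular language over $\Sigma$, let $\mathcal{F}=(M,\{A^u\})$ be the periodic (respectively syntactic, recurrent) FDFA of $L$, and let $u,v\in\Sigma^*$. If $(u,v)$ is accepted by $\mathcal{F}$, then $(u,v^k)$ is accepted by $\mathcal{F}$ for every $k\geq1$.
   Context: For a complete DFA $A$ and finite word $w$, $A(w)$ is the state reached from the initial state on $w$. An FDFA is $\mathcal{F}=(M,\{A^q\}_{q\in Q})$ with $M$ a complete DFA without accepting states and each $A^q$ a complete DFA; $(u,v)$ is accepted by $\mathcal{F}$ iff $M(uv)=M(u)$ and $v\in L(A^{M(u)})$. Canonical FDFAs of an $\omega$-regular $L$: $x\sim_L y$ iff $\forall w\in\Sigma^\omega$, $xw\in L\Leftrightarrow yw\in L$. The leading automaton has states the classes of $\sim_L$, initial state $[\epsilon]$, transitions $[x]\xrightarrow{a}[xa]$. For each state with representative $u$: $x\approx^u_P y$ iff $\forall v\in\Sigma^*$: $u(xv)^\omega\in L\Leftrightarrow u(yv)^\omega\in L$; $x\approx^u_S y$ iff $ux\sim_L uy$ and $\forall v$: $uxv\sim_L u\Rightarrow(u(xv)^\omega\in L\Leftrightarrow u(yv)^\omega\in L)$; $x\approx^u_R y$ iff $\forall v$: $(uxv\sim_L u\wedge u(xv)^\omega\in L)\Leftrightarrow(uyv\sim_L u\wedge u(yv)^\omega\in L)$. For $K\in\{P,S,R\}$ the progress automaton $A^u$ has states the classes of $\approx^u_K$, initial state $[\epsilon]$, transitions $[x]\xrightarrow{a}[xa]$, and accepting states the classes $[v]$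 with $uv^\omega\in L$ ($K=P$), resp. with $uv\sim_L u$ and $uv^\omega\in L$ ($K\in\{S,R\}$). These are the periodic ($P$), syntactic ($S$) and recurrent ($R$) FDFAs of $L$. *)

theory Defs
  imports "HOL-Library.Omega_Words_Fun"
begin

definition buchi_accepts ::
  "nat set \<Rightarrow> (nat \<Rightarrow> 'a \<Rightarrow> nat set) \<Rightarrow> nat set \<Rightarrow> 'a word \<Rightarrow> bool" where
  "buchi_accepts I \<delta> F w \<longleftrightarrow>
     (\<exists>r :: nat \<Rightarrow> nat. r 0 \<in> I \<and> (\<forall>i. r (Suc i) \<in> \<delta> (r i) (w i)) \<and> (\<exists>\<^sub>\<infinity>i. r i \<in> F))"

definition omega_regular :: "'a word set \<Rightarrow> bool" where
  "omega_regular L \<longleftrightarrow>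
     (\<exists>(Q::nat set) I \<delta> F. finite Q \<and> I \<subseteq> Q \<and> F \<subseteq> Q \<and> (\<forall>q a. \<delta> q a \<subseteq> Q) \<and>
        L = {w. buchi_accepts I \<delta> F w})"

record ('q, 'a) dfa =
  dfa_init :: 'q
  dfa_delta :: "'q \<Rightarrow> 'a \<Rightarrow> 'q"
  dfa_acc :: "'q set"

definition dfa_run :: "('q, 'a) dfa \<Rightarrow> 'a list \<Rightarrow> 'q" where
  "dfa_run A w = foldl (dfa_delta A) (dfa_init A) w"

definition dfa_lang :: "('q, 'a) dfa \<Rightarrow> 'a list set" where
  "dfa_lang A = {w. dfa_run A w \<in> dfa_acc A}"

record ('q, 'p, 'a) fdfa =
  fdfa_lead :: "('q, 'a) dfa"
  fdfa_prog :: "'q \<Rightarrow> ('p, 'a) dfa"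

definition fdfa_accepts :: "('q, 'p, 'a) fdfa \<Rightarrow> 'a list \<Rightarrow> 'a list \<Rightarrow> bool" where
  "fdfa_accepts \<F> u v \<longleftrightarrow>
     dfa_run (fdfa_lead \<F>) (u @ v) = dfa_run (fdfa_lead \<F>) u \<and>
     v \<in> dfa_lang (fdfa_prog \<F> (dfa_run (fdfa_lead \<F>) u))"

definition sim :: "'a word set \<Rightarrow> 'a list \<Rightarrow> 'a list \<Rightarrow> bool" where
  "sim L x y \<longleftrightarrow> (\<forall>w. x \<frown> w \<in> L \<longleftrightarrow> y \<frown> w \<in> L)"

definition rep :: "'a list set \<Rightarrow> 'a list" where
  "rep C = (SOME x. x \<in> C)"

definition leading :: "'a word set \<Rightarrow> ('a list set, 'a) dfa" where
  "leading L = \<lparr> dfa_init = {y. sim L [] y},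
                 dfa_delta = (\<lambda>C a. {y. sim L (rep C @ [a]) y}),
                 dfa_acc = {} \<rparr>"

datatype fdfa_kind = Periodic | Syntactic | Recurrent

definition approx :: "fdfa_kind \<Rightarrow> 'a word set \<Rightarrow> 'a list \<Rightarrow> 'a list \<Rightarrow> 'a list \<Rightarrow> bool" where
  "approx K L u x y = (case K of
     Periodic \<Rightarrow> (\<forall>v. u \<frown> iter (x @ v) \<in> L \<longleftrightarrow> u \<frown> iter (y @ v) \<in> L)
   | Syntactic \<Rightarrow> sim L (u @ x) (u @ y) \<and>
        (\<forall>v. sim L (u @ x @ v) u \<longrightarrow> (u \<frown> iter (x @ v) \<in> L \<longleftrightarrow> u \<frown> iter (y @ v) \<in> L))
   | Recurrent \<Rightarrow> (\<forall>v. (sim L (u @ x @ v) u \<and> u \<frown> iter (x @ v) \<in> L) \<longleftrightarrow>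
                      (sim L (u @ y @ v) u \<and> u \<frown> iter (y @ v) \<in> L)))"

definition prog_acc_cond :: "fdfa_kind \<Rightarrow> 'a word set \<Rightarrow> 'a list \<Rightarrow> 'a list \<Rightarrow> bool" where
  "prog_acc_cond K L u v = (case K of
     Periodic \<Rightarrow> u \<frown> iter v \<in> L
   | _ \<Rightarrow> sim L (u @ v) u \<and> u \<frown> iter v \<in> L)"

definition progress :: "fdfa_kind \<Rightarrow> 'a word set \<Rightarrow> 'a list \<Rightarrow> ('a list set, 'a) dfa" where
  "progress K L u = \<lparr> dfa_init = {y. approx K L u [] y},
                      dfa_delta = (\<lambda>C a. {y. approx K L u (rep C @ [a]) y}),
                      dfa_acc = {{y. approx K L u v y} | v. prog_acc_cond K L u v} \<rparr>"

definition canonical_fdfa :: "fdfa_kind \<Rightarrow> 'a word set \<Rightarrow> ('a list set, 'a list set, 'a) fdfa" where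
  "canonical_fdfa K L = \<lparr> fdfa_lead = leading L, fdfa_prog = (\<lambda>q. progress K L (rep q)) \<rparr>"

end

theory Submission
  imports Defs
begin

text \<open>
  Both the leading automaton and the progress automata are the class automata of right
  congruences, so a DFA run ends in the class of the input word and acceptance of
  \<open>(u, v)\<close> reduces to \<open>u v \<sim>\<^sub>L u\<close> together with the acceptance condition on \<open>v\<close>
  itself. Both conditions are stable under replacing \<open>v\<close> by \<open>v\<^sup>k\<close>: the first because
  \<open>\<sim>\<^sub>L\<close> is a right congruence, the second because \<open>(v\<^sup>k)\<^sup>\<omega> = v\<^sup>\<omega>\<close>.
\<close>

lemma rep_mem: "x \<in> C \<Longrightarrow> rep C \<in> C"
  unfolding rep_def by (rule someI)

lemma class_automaton_run:
  assumes "equivp R" and right_cong: "\<And>x y a. R x y \<Longrightarrow> R (x @ [a]) (y @ [a])"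
  shows "foldl (\<lambda>C a. {y. R (rep C @ [a]) y}) {y. R [] y} w = {y. R w y}"
proof (induction w rule: rev_induct)
  case Nil
  show ?case by simp
next
  case (snoc a w)
  have "R w (rep {y. R w y})"
    using rep_mem[of w "{y. R w y}"] equivp_reflp[OF \<open>equivp R\<close>] by simp
  then have "R (rep {y. R w y}) w"
    by (rule equivp_symp[OF \<open>equivp R\<close>])
  then have "R (rep {y. R w y} @ [a]) (w @ [a])"
    by (rule right_cong)
  then have "R (rep {y. R w y} @ [a]) = R (w @ [a])"
    using \<open>equivp R\<close> unfolding equivp_def by blast
  with snoc.IH show ?case
    by simp
qed

definition residual :: "'a word set \<Rightarrow> 'a list \<Rightarrow> 'a word set" where
  "residual L x = {w. x \<frown> w \<in> L}"

lemma sim_iff_residual_eq: "sim L x y \<longleftrightarrow> residual L x = residual L y"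
  by (auto simp: sim_def residual_def)

lemma residual_append: "residual L (x @ z) = {w. z \<frown> w \<in> residual L x}"
  by (simp add: residual_def)

lemma sim_equivp: "equivp (sim L)"
  by (rule equivpI) (auto simp: reflp_def symp_def transp_def sim_iff_residual_eq)

lemma sim_append_right: "sim L x y \<Longrightarrow> sim L (x @ z) (y @ z)"
  by (simp add: sim_iff_residual_eq residual_append)

lemma sim_append_concat_replicate:
  assumes "sim L (u @ v) u"
  shows "sim L (u @ concat (replicate k v)) u"
proof (induction k)
  case 0
  show ?case by (simp add: sim_def)
next
  case (Suc k)
  have "sim L (u @ v @ concat (replicate k v)) (u @ concat (replicate k v))"
    using sim_append_right[OF assms] by simp
  with Suc.IH show ?case
    by (simp add: sim_iff_residual_eq)
qed

lemma dfa_run_leading: "dfa_run (leading L) w = {y. sim L w y}"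
  unfolding dfa_run_def leading_def
  using class_automaton_run[OF sim_equivp sim_append_right] by simp

text \<open>
  Each \<open>\<approx>\<^sup>u\<^sub>K\<close> is the kernel of this map. The first component matters only in the syntactic
  case, where it makes \<open>u x v \<sim>\<^sub>L u\<close> a function of the class of \<open>x\<close>.
\<close>
definition approx_key ::
  "fdfa_kind \<Rightarrow> 'a word set \<Rightarrow> 'a list \<Rightarrow> 'a list \<Rightarrow> 'a word set \<times> ('a list \<Rightarrow> bool)" where
  "approx_key K L u x = (case K of
     Periodic \<Rightarrow> ({}, \<lambda>v. u \<frown> iter (x @ v) \<in> L)
   | Syntactic \<Rightarrow> (residual L (u @ x), \<lambda>v. sim L (u @ x @ v) u \<and> u \<frown> iter (x @ v) \<in> L)
   | Recurrent \<Rightarrow> ({}, \<lambda>v. sim L (u @ x @ v) u \<and> u \<frown> iter (x @ v) \<in> L))"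

lemma approx_iff_approx_key_eq: "approx K L u x y \<longleftrightarrow> approx_key K L u x = approx_key K L u y"
proof (cases K)
  case Syntactic
  have "sim L (u @ x @ v) u \<longleftrightarrow> sim L (u @ y @ v) u"
    if "residual L (u @ x) = residual L (u @ y)" for v
    using that residual_append[of L "u @ x" v] residual_append[of L "u @ y" v]
    by (simp add: sim_iff_residual_eq)
  with Syntactic show ?thesis
    by (auto simp: approx_def approx_key_def sim_iff_residual_eq fun_eq_iff)
qed (auto simp: approx_def approx_key_def fun_eq_iff)

lemma approx_equivp: "equivp (approx K L u)"
  by (rule equivpI) (auto simp: reflp_def symp_def transp_def approx_iff_approx_key_eq)

lemma approx_append_right: "approx K L u x y \<Longrightarrow> approx K L u (x @ [a]) (y @ [a])"
  by (cases K) (auto simp: approx_iff_approx_key_eq approx_key_def residual_append fun_eq_iff)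

lemma dfa_run_progress: "dfa_run (progress K L u) w = {y. approx K L u w y}"
  unfolding dfa_run_def progress_def
  using class_automaton_run[OF approx_equivp approx_append_right] by simp

lemma prog_acc_cond_eq_approx_key: "prog_acc_cond K L u x \<longleftrightarrow> snd (approx_key K L u x) []"
  by (cases K) (simp_all add: prog_acc_cond_def approx_key_def)

lemma prog_acc_cond_approx:
  assumes "approx K L u x y" and "prog_acc_cond K L u y"
  shows "prog_acc_cond K L u x"
  using assms by (simp add: prog_acc_cond_eq_approx_key approx_iff_approx_key_eq)

lemma dfa_lang_progress: "w \<in> dfa_lang (progress K L u) \<longleftrightarrow> prog_acc_cond K L u w"
proof
  assume "w \<in> dfa_lang (progress K L u)"
  then obtain v where acc: "prog_acc_cond K L u v"
    and same_class: "{y. approx K L u w y} = {y. approx K L u v y}"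
    unfolding dfa_lang_def dfa_run_progress by (auto simp: progress_def)
  have "approx K L u w v"
    using same_class equivp_reflp[OF approx_equivp, of K L u v] by blast
  then show "prog_acc_cond K L u w"
    using acc by (rule prog_acc_cond_approx)
next
  assume "prog_acc_cond K L u w"
  then show "w \<in> dfa_lang (progress K L u)"
    unfolding dfa_lang_def dfa_run_progress by (auto simp: progress_def)
qed

lemma fdfa_accepts_canonical_fdfa_iff:
  "fdfa_accepts (canonical_fdfa K L) u v \<longleftrightarrow>
     sim L (u @ v) u \<and> prog_acc_cond K L (rep {y. sim L u y}) v"
proof -
  have "{y. sim L (u @ v) y} = {y. sim L u y} \<longleftrightarrow> sim L (u @ v) u"
    by (auto simp: sim_def)
  then show ?thesis
    by (simp add: fdfa_accepts_def canonical_fdfa_def dfa_run_leading dfa_lang_progress)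
qed

lemma nth_concat_replicate:
  "i < k * length v \<Longrightarrow> concat (replicate k v) ! i = v ! (i mod length v)"
proof (induction k arbitrary: i)
  case 0
  then show ?case by simp
next
  case (Suc k)
  show ?case
  proof (cases "i < length v")
    case True
    then show ?thesis by (simp add: nth_append)
  next
    case False
    with Suc have "concat (replicate (Suc k) v) ! i = v ! ((i - length v) mod length v)"
      by (simp add: nth_append)
    also have "(i - length v) mod length v = i mod length v"
      using False by (simp add: le_mod_geq)
    finally show ?thesis .
  qed
qed

lemma iter_concat_replicate:
  assumes "v \<noteq> []" and "k \<ge> 1"
  shows "iter (concat (replicate k v)) = iter v"
proof
  fix n
  have len: "length (concat (replicate k v)) = k * length v"
    by (simp add: length_concat sum_list_replicate)
  have pos: "0 < k * length v"
    using assms by simp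
  have "iter (concat (replicate k v)) n = concat (replicate k v) ! (n mod (k * length v))"
    using len pos by simp
  also have "\<dots> = v ! (n mod (k * length v) mod length v)"
    using pos by (simp add: nth_concat_replicate)
  also have "\<dots> = iter v n"
    using assms by (simp add: mod_mod_cancel)
  finally show "iter (concat (replicate k v)) n = iter v n" .
qed

lemma prog_acc_cond_concat_replicate:
  assumes "prog_acc_cond K L u v" and "k \<ge> 1"
  shows "prog_acc_cond K L u (concat (replicate k v))"
proof (cases "v = []")
  case True
  with assms(1) show ?thesis by simp
next
  case False
  have "sim L (u @ v) u \<Longrightarrow> sim L (u @ concat (replicate k v)) u"
    by (rule sim_append_concat_replicate)
  with assms(1) iter_concat_replicate[OF False assms(2)] show ?thesis
    by (cases K) (auto simp: prog_acc_cond_def)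
qed

theorem proposition1:
  fixes L :: "('a::finite) word set" and K :: fdfa_kind and u v :: "'a list"
  assumes "omega_regular L"
    and "fdfa_accepts (canonical_fdfa K L) u v"
  shows "\<forall>k\<ge>1. fdfa_accepts (canonical_fdfa K L) u (concat (replicate k v))"
proof (intro allI impI)
  fix k :: nat
  assume "k \<ge> 1"
  from assms(2) have "sim L (u @ v) u" and "prog_acc_cond K L (rep {y. sim L u y}) v"
    by (simp_all add: fdfa_accepts_canonical_fdfa_iff)
  with \<open>k \<ge> 1\<close> show "fdfa_accepts (canonical_fdfa K L) u (concat (replicate k v))"
    by (simp add: fdfa_accepts_canonical_fdfa_iff sim_append_concat_replicate
        prog_acc_cond_concat_replicate)
qed

end
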